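(* For every $n\ge2$ and $m\in\{0,1,2,3\}$ let $U_{n,m}=\sum_{k=0}^{n-2}\frac{k^m(n+k-2)!}{k!\,2^k}$ (with $0^0=1$). Then $U_{n,0}=(2n-4)!!$, $U_{n,1}=(n-1)(2n-4)!!-(2n-3)!!$, $U_{n,2}=(n^2-1)(2n-4)!!-(2n-1)(2n-3)!!$, $U_{n,3}=(n^3+3n^2-3n-1)(2n-4)!!-(3n^2+n-1)(2n-3)!!$.
   Context: Double factorials: $(2m-1)!!=(2m-1)(2m-3)\cdots3\cdot1$, $(2m)!!=(2m)(2m-2)\cdots2$, with $0!!=1$. *)

theory Defs
  imports Complex_Main
begin

fun dfact :: "nat \<Rightarrow> nat" where
  "dfact 0 = 1"
| "dfact (Suc 0) = 1"
| "dfact (Suc (Suc n)) = Suc (Suc n) * dfact n"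

definition U :: "nat \<Rightarrow> nat \<Rightarrow> real" where
  "U n m = (\<Sum>k = 0..n-2. real (k ^ m) * fact (n + k - 2) / (fact k * 2 ^ k))"

end

theory Submission
  imports Defs
begin

text \<open>Write \<open>N = n - 2\<close> and \<open>w N k = (N + k)! / (k! 2\<^sup>k)\<close>. These weights satisfy the
  Pascal-type rule \<open>w (N+1) (k+1) = (N+1) w N (k+1) + w (N+1) k / 2\<close>, and the diagonal weight
  \<open>w (N+1) (N+1)\<close> is \<open>(2N+1)!!\<close>. Summing the rule against \<open>k\<^sup>m\<close> and expanding \<open>(k+1)\<^sup>m\<close> binomially
  expresses the \<open>m\<close>-th moment at \<open>N+1\<close> through the \<open>m\<close>-th moment at \<open>N\<close> and the lower moments at
  \<open>N+1\<close>, so the four closed forms follow one after another by induction on \<open>N\<close>.\<close>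

definition fact_weight :: "nat \<Rightarrow> nat \<Rightarrow> real" where
  "fact_weight N k = fact (N + k) / (fact k * 2 ^ k)"

definition fact_moment :: "nat \<Rightarrow> nat \<Rightarrow> real" where
  "fact_moment m N = (\<Sum>k\<le>N. real k ^ m * fact_weight N k)"

lemma fact_weight_Suc_left: "fact_weight (Suc N) k = (real N + real k + 1) * fact_weight N k"
  by (simp add: fact_weight_def algebra_simps)

lemma fact_weight_Suc_right:
  "2 * (real k + 1) * fact_weight N (Suc k) = (real N + real k + 1) * fact_weight N k"
proof -
  define a where "a = (fact (N + k) :: real)"
  define b where "b = (fact k :: real) * 2 ^ k"
  define c where "c = real N + real k + 1"
  define d where "d = real k + 1"
  have succ: "fact_weight N (Suc k) = c * a / (d * b * 2)"
    by (simp add: fact_weight_def a_def b_def c_def d_def algebra_simps)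
  have weight: "fact_weight N k = a / b"
    by (simp add: fact_weight_def a_def b_def)
  have "b \<noteq> 0" and "d \<noteq> 0"
    by (simp_all add: b_def d_def)
  then show ?thesis
    unfolding c_def [symmetric] d_def [symmetric] succ weight by (simp add: field_simps)
qed

lemma fact_weight_Suc_0: "fact_weight (Suc N) 0 = (real N + 1) * fact_weight N 0"
  by (simp add: fact_weight_Suc_left)

lemma fact_weight_Suc_Suc:
  "fact_weight (Suc N) (Suc k) = (real N + 1) * fact_weight N (Suc k) + fact_weight (Suc N) k / 2"
  using fact_weight_Suc_right [of k N]
  by (simp add: fact_weight_Suc_left algebra_simps)

lemma fact_weight_above_diag: "fact_weight (Suc N) (Suc N) = (2 * real N + 2) * fact_weight N (Suc N)"
  by (simp add: fact_weight_Suc_left)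

lemma fact_weight_diag: "fact_weight (Suc N) (Suc N) = dfact (2 * N + 1)"
proof (induction N)
  case 0
  then show ?case by (simp add: fact_weight_def)
next
  case (Suc N)
  have "fact_weight (Suc (Suc N)) (Suc (Suc N)) = fact_weight (Suc (Suc N)) (Suc N)"
    using fact_weight_Suc_right [of "Suc N" "Suc (Suc N)"] by simp
  also have "\<dots> = (2 * real N + 3) * fact_weight (Suc N) (Suc N)"
    by (simp add: fact_weight_Suc_left [of "Suc N"])
  finally show ?case
    using Suc.IH by (simp add: algebra_simps)
qed

lemma sum_fact_weight_Suc:
  fixes c :: "nat \<Rightarrow> real"
  shows "(\<Sum>k\<le>Suc N. c k * fact_weight (Suc N) k) =
     (real N + 1) * (\<Sum>k\<le>Suc N. c k * fact_weight N k) + (\<Sum>k\<le>N. c (Suc k) * fact_weight (Suc N) k) / 2"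
proof -
  have "(\<Sum>k\<le>Suc N. c k * fact_weight (Suc N) k)
      = c 0 * fact_weight (Suc N) 0 + (\<Sum>k\<le>N. c (Suc k) * fact_weight (Suc N) (Suc k))"
    by (rule sum.atMost_Suc_shift)
  also have "\<dots> = (real N + 1) * (c 0 * fact_weight N 0 + (\<Sum>k\<le>N. c (Suc k) * fact_weight N (Suc k)))
      + (\<Sum>k\<le>N. c (Suc k) * fact_weight (Suc N) k) / 2"
    by (simp add: fact_weight_Suc_0 fact_weight_Suc_Suc algebra_simps sum.distrib
        sum_distrib_left sum_divide_distrib)
  also have "c 0 * fact_weight N 0 + (\<Sum>k\<le>N. c (Suc k) * fact_weight N (Suc k))
      = (\<Sum>k\<le>Suc N. c k * fact_weight N k)"
    by (rule sum.atMost_Suc_shift [symmetric])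
  finally show ?thesis .
qed

lemma sum_shifted_power_fact_weight:
  "(\<Sum>k\<le>N. (real k + 1) ^ m * fact_weight N k) = (\<Sum>j\<le>m. (m choose j) * fact_moment j N)"
  by (simp add: fact_moment_def binomial_ring sum_distrib_left sum_distrib_right
      sum.swap [of _ "{..m}"] mult_ac)

lemma fact_moment_Suc:
  "fact_moment m (Suc N) = 2 * (real N + 1) * fact_moment m N
     + ((real N + 1) ^ m - (real N + 2) ^ m) * dfact (2 * N + 1)
     + (\<Sum>j<m. (m choose j) * fact_moment j (Suc N))"
proof -
  let ?D = "real (dfact (2 * N + 1))"
  have "(real N + 1) * fact_weight N (Suc N) = ?D / 2"
    using fact_weight_above_diag [of N] fact_weight_diag [of N] by (simp add: field_simps)
  then have top: "(real N + 1) ^ m * ((real N + 1) * fact_weight N (Suc N)) = (real N + 1) ^ m * ?D / 2"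
    by simp
  have "(\<Sum>k\<le>N. real (Suc k) ^ m * fact_weight (Suc N) k)
      = (\<Sum>k\<le>Suc N. (real k + 1) ^ m * fact_weight (Suc N) k) - (real N + 2) ^ m * ?D"
    by (simp add: fact_weight_diag add_ac)
  also have "\<dots> = fact_moment m (Suc N) + (\<Sum>j<m. (m choose j) * fact_moment j (Suc N))
      - (real N + 2) ^ m * ?D"
    unfolding sum_shifted_power_fact_weight
    unfolding lessThan_Suc_atMost [symmetric] sum.lessThan_Suc by simp
  finally have shifted: "(\<Sum>k\<le>N. real (Suc k) ^ m * fact_weight (Suc N) k) = \<dots>" .
  have recurrence: "fact_moment m (Suc N) = (real N + 1) * fact_moment m N
      + (real N + 1) ^ m * ((real N + 1) * fact_weight N (Suc N))
      + (\<Sum>k\<le>N. real (Suc k) ^ m * fact_weight (Suc N) k) / 2"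
    using sum_fact_weight_Suc [of "\<lambda>k. real k ^ m" N]
    by (simp add: fact_moment_def algebra_simps)
  \<comment> \<open>The moment at \<open>N + 1\<close> occurs on both sides of \<open>recurrence\<close>; solving for it
    abstractly keeps the simplifier from rewriting it with itself.\<close>
  have solve: "x = a * s + p * d / 2 + (x + r - q * d) / 2 \<Longrightarrow> x = 2 * a * s + (p - q) * d + r"
    for x a s p q d r :: real
    by (simp add: field_simps)
  show ?thesis
    using recurrence unfolding shifted top by (rule solve)
qed

lemma fact_moment_0: "fact_moment 0 N = dfact (2 * N)"
proof (induction N)
  case 0
  then show ?case by (simp add: fact_moment_def fact_weight_def)
next
  case (Suc N)
  show ?case
    unfolding fact_moment_Suc [of 0] Suc.IH by (simp add: algebra_simps)
qed

lemma fact_moment_1: "fact_moment 1 N = (real N + 1) * dfact (2 * N) - dfact (2 * N + 1)"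
proof (induction N)
  case 0
  then show ?case by (simp add: fact_moment_def fact_weight_def)
next
  case (Suc N)
  show ?case
    unfolding fact_moment_Suc [of 1] Suc.IH
    by (simp add: fact_moment_0 algebra_simps)
qed

lemma fact_moment_2:
  "fact_moment 2 N = ((real N + 2) ^ 2 - 1) * dfact (2 * N) - (2 * real N + 3) * dfact (2 * N + 1)"
proof (induction N)
  case 0
  then show ?case by (simp add: fact_moment_def fact_weight_def)
next
  case (Suc N)
  have lower: "(\<Sum>j<2. (2 choose j) * fact_moment j (Suc N))
      = fact_moment 0 (Suc N) + 2 * fact_moment 1 (Suc N)"
    by (simp add: eval_nat_numeral)
  show ?case
    unfolding fact_moment_Suc [of 2] lower Suc.IH fact_moment_0 fact_moment_1
    by (simp add: algebra_simps power2_eq_square)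
qed

lemma fact_moment_3:
  "fact_moment 3 N = ((real N + 2) ^ 3 + 3 * (real N + 2) ^ 2 - 3 * (real N + 2) - 1) * dfact (2 * N)
     - (3 * (real N + 2) ^ 2 + (real N + 2) - 1) * dfact (2 * N + 1)"
proof (induction N)
  case 0
  then show ?case by (simp add: fact_moment_def fact_weight_def)
next
  case (Suc N)
  have lower: "(\<Sum>j<3. (3 choose j) * fact_moment j (Suc N))
      = fact_moment 0 (Suc N) + 3 * fact_moment 1 (Suc N) + 3 * fact_moment 2 (Suc N)"
    by (simp add: eval_nat_numeral)
  show ?case
    unfolding fact_moment_Suc [of 3] lower Suc.IH fact_moment_0 fact_moment_1 fact_moment_2
    by (simp add: algebra_simps power2_eq_square power3_eq_cube)
qed

theorem lemma10:
  fixes n :: nat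
  assumes "n \<ge> 2"
  shows "U n 0 = real (dfact (2*n - 4)) \<and>
         U n 1 = (real n - 1) * dfact (2*n - 4) - dfact (2*n - 3) \<and>
         U n 2 = ((real n)^2 - 1) * dfact (2*n - 4) - (2 * real n - 1) * dfact (2*n - 3) \<and>
         U n 3 = ((real n)^3 + 3 * (real n)^2 - 3 * real n - 1) * dfact (2*n - 4)
                 - (3 * (real n)^2 + real n - 1) * dfact (2*n - 3)"
proof -
  obtain N where n: "n = N + 2"
    using assms le_Suc_ex by (metis add.commute)
  have "U n m = fact_moment m N" for m
    unfolding U_def fact_moment_def fact_weight_def n by (simp add: atLeast0AtMost)
  moreover have "2 * n - 4 = 2 * N" and "2 * n - 3 = 2 * N + 1" and "real n = real N + 2"
    using n by auto
  ultimately show ?thesis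
    using fact_moment_0 fact_moment_1 fact_moment_2 fact_moment_3 by (simp add: algebra_simps)
qed

end
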